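(* Let $\alpha\geq 0$ and $r_\alpha(x)=\|x\|_1-\alpha\|x\|_2$ on $\mathbb{R}^N$. Let $l:\mathbb{R}^N\to\mathbb{R}$ be differentiable with $\|\nabla l(x)-\nabla l(y)\|_2\leq L\|x-y\|_2$ for all $x,y$, for some $L>0$. Define $E(x)=r_\alpha(x)+l(x)$ and assume that $E$ is coercive, i.e., $E(x)\to+\infty$ as $\|x\|_2\to+\infty$. Let $0<\lambda<1/L$, let $x^0\in\mathbb{R}^N$, and let $(x^k)$ be generated by the forward-backward splitting iteration $$x^{k+1}\in\operatorname{argmin}_{x}\ \Big(r_\alpha(x)+\frac{1}{2\lambda}\big\|x-(x^k-\lambda\nabla l(x^k))\big\|_2^2\Big).$$ Then the sequence of objective values $E(x^k)$ is decreasing, there exists a subsequence of $(x^k)$ that converges to a stationary point of $E$, and every limit point of $(x^k)$ is a stationary point of $E$.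
   Context: A stationary point of $E$ is a point $x$ satisfying the first-order optimality condition $0\in\partial r_\alpha(x)+\nabla l(x)$, where $\partial$ denotes the (limiting) subdifferential. *)

theory Defs
  imports "HOL-Analysis.Analysis"
begin

text \<open>l1 norm on R^N, modelled as real ^ 'n.  The Euclidean norm is the library norm.\<close>
definition l1norm :: "real ^ 'n \<Rightarrow> real" where
  "l1norm x = (\<Sum>i\<in>UNIV. \<bar>x $ i\<bar>)"

definition r_alpha :: "real \<Rightarrow> real ^ 'n \<Rightarrow> real" where
  "r_alpha \<alpha> x = l1norm x - \<alpha> * norm x"

definition frechet_subdiff :: "(real ^ 'n \<Rightarrow> real) \<Rightarrow> real ^ 'n \<Rightarrow> (real ^ 'n) set" where
  "frechet_subdiff f x = {v. \<forall>\<epsilon>>0. \<exists>\<delta>>0. \<forall>y. norm (y - x) < \<delta> \<longrightarrow>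
      f y \<ge> f x + inner v (y - x) - \<epsilon> * norm (y - x)}"

definition limiting_subdiff :: "(real ^ 'n \<Rightarrow> real) \<Rightarrow> real ^ 'n \<Rightarrow> (real ^ 'n) set" where
  "limiting_subdiff f x = {v. \<exists>xs vs. (xs \<longlonglongrightarrow> x) \<and> ((\<lambda>k. f (xs k)) \<longlonglongrightarrow> f x)
      \<and> (vs \<longlonglongrightarrow> v) \<and> (\<forall>k. vs k \<in> frechet_subdiff f (xs k))}"

text \<open>Stationary point of E = r_alpha + l, with gradient g of l: 0 \<in> \<partial>r_alpha(x) + g x.\<close>
definition stationary_point :: "real \<Rightarrow> (real ^ 'n \<Rightarrow> real ^ 'n) \<Rightarrow> real ^ 'n \<Rightarrow> bool" where
  "stationary_point \<alpha> g x \<longleftrightarrow> - g x \<in> limiting_subdiff (r_alpha \<alpha>) x"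

end

theory Submission
  imports Defs
begin

text \<open>
  Since l has an L-Lipschitz gradient, l lies below its linearisation plus L/2 |h|^2. Comparing
  the proximal minimiser x(k+1) with the competitor x(k) therefore gives the sufficient decrease
  E(x(k+1)) \<le> E(x(k)) - (1/(2 lam) - L/2) |x(k+1) - x(k)|^2, whose constant is positive because
  lam < 1/L. Coercivity makes E bounded below and the iterates bounded, so the squared increments
  are summable, the increments tend to 0, and a convergent subsequence exists. The optimality
  condition of the proximal step puts -(x(k+1) - x(k))/lam - g(x(k)) into the Frechet
  subdifferential of r_alpha at x(k+1); along a subsequence converging to z these vectors tend to
  -g(z), and continuity of r_alpha supplies the convergence of function values required by the
  limiting subdifferential.
\<close>

lemma norm_add_power2:
  fixes u w :: "'a::real_inner"
  shows "(norm (u + w))\<^sup>2 = (norm u)\<^sup>2 + 2 * inner u w + (norm w)\<^sup>2"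
  using dot_norm[of u w] by simp

lemma descent_lemma:
  fixes l :: "'a::real_inner \<Rightarrow> real" and g :: "'a \<Rightarrow> 'a"
  assumes grad: "\<And>y. (l has_derivative (\<lambda>h. inner (g y) h)) (at y)"
    and lip: "\<And>y z. norm (g y - g z) \<le> L * norm (y - z)"
  shows "l (a + h) \<le> l a + inner (g a) h + L / 2 * (norm h)\<^sup>2"
proof -
  define \<phi> where "\<phi> t = l (a + t *\<^sub>R h) - t * inner (g a) h - L / 2 * t\<^sup>2 * (norm h)\<^sup>2" for t
  define \<phi>' where "\<phi>' t = inner (g (a + t *\<^sub>R h) - g a) h - L * t * (norm h)\<^sup>2" for t
  have "(\<phi> has_real_derivative \<phi>' t) (at t)" for t
  proof -
    have "((\<lambda>t. l (a + t *\<^sub>R h)) has_derivative (\<lambda>s. inner (g (a + t *\<^sub>R h)) (s *\<^sub>R h))) (at t)"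
      by (rule has_derivative_compose[OF _ grad]) (auto intro!: derivative_eq_intros)
    then show ?thesis unfolding \<phi>_def[abs_def] \<phi>'_def has_field_derivative_def
      by (auto intro!: derivative_eq_intros simp: inner_diff_left algebra_simps)
  qed
  then obtain t where t: "0 < t" "t < 1" "\<phi> 1 - \<phi> 0 = \<phi>' t"
    using MVT2[of 0 1 \<phi> \<phi>'] by auto
  have "inner (g (a + t *\<^sub>R h) - g a) h \<le> norm (g (a + t *\<^sub>R h) - g a) * norm h"
    by (rule norm_cauchy_schwarz)
  also have "\<dots> \<le> L * norm (t *\<^sub>R h) * norm h"
    using lip[of "a + t *\<^sub>R h" a] by (simp add: mult_right_mono)
  also have "\<dots> = L * t * (norm h)\<^sup>2" using t by (simp add: power2_eq_square)
  finally have "\<phi>' t \<le> 0" unfolding \<phi>'_def by simp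
  with t show ?thesis unfolding \<phi>_def by simp
qed

lemma prox_point_frechet_subdiff:
  fixes r :: "real ^ 'n \<Rightarrow> real"
  assumes lam: "lam > 0"
    and prox: "\<forall>y. r p + 1 / (2 * lam) * (norm (p - d))\<^sup>2 \<le> r y + 1 / (2 * lam) * (norm (y - d))\<^sup>2"
  shows "- (1 / lam) *\<^sub>R (p - d) \<in> frechet_subdiff r p"
  unfolding frechet_subdiff_def
proof (intro CollectI allI impI)
  fix \<epsilon> :: real assume "\<epsilon> > 0"
  show "\<exists>\<delta>>0. \<forall>y. norm (y - p) < \<delta> \<longrightarrow>
      r y \<ge> r p + inner (- (1 / lam) *\<^sub>R (p - d)) (y - p) - \<epsilon> * norm (y - p)"
  proof (intro exI[of _ "2 * lam * \<epsilon>"] conjI allI impI)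
    show "2 * lam * \<epsilon> > 0" using lam \<open>\<epsilon> > 0\<close> by simp
    fix y assume y: "norm (y - p) < 2 * lam * \<epsilon>"
    have "r p + (norm (p - d))\<^sup>2 / (2 * lam) \<le>
        r y + ((norm (y - p))\<^sup>2 + 2 * inner (y - p) (p - d) + (norm (p - d))\<^sup>2) / (2 * lam)"
      using prox[rule_format, of y] norm_add_power2[of "y - p" "p - d"] by simp
    then have "r p \<le> r y + (norm (y - p))\<^sup>2 / (2 * lam) + inner (y - p) (p - d) / lam"
      using lam by (simp add: add_divide_distrib)
    moreover have "norm (y - p) * norm (y - p) \<le> norm (y - p) * (2 * lam * \<epsilon>)"
      using y by (intro mult_left_mono) auto
    then have "(norm (y - p))\<^sup>2 / (2 * lam) \<le> \<epsilon> * norm (y - p)"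
      using lam by (simp add: power2_eq_square divide_le_eq mult_ac)
    ultimately show "r y \<ge> r p + inner (- (1 / lam) *\<^sub>R (p - d)) (y - p) - \<epsilon> * norm (y - p)"
      by (simp add: inner_commute)
  qed
qed

lemma forward_backward_sufficient_decrease:
  fixes r l :: "'a::real_inner \<Rightarrow> real" and g :: "'a \<Rightarrow> 'a"
  assumes grad: "\<And>y. (l has_derivative (\<lambda>h. inner (g y) h)) (at y)"
    and lip: "\<And>y z. norm (g y - g z) \<le> L * norm (y - z)"
    and lam: "lam > 0"
    and prox: "\<forall>y. r p + 1 / (2 * lam) * (norm (p - (x - lam *\<^sub>R g x)))\<^sup>2
                \<le> r y + 1 / (2 * lam) * (norm (y - (x - lam *\<^sub>R g x)))\<^sup>2"
  shows "r p + l p \<le> r x + l x - (1 / (2 * lam) - L / 2) * (norm (p - x))\<^sup>2"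
proof -
  have "p - (x - lam *\<^sub>R g x) = (p - x) + lam *\<^sub>R g x" "x - (x - lam *\<^sub>R g x) = lam *\<^sub>R g x"
    by simp_all
  then have "r p + ((norm (p - x))\<^sup>2 + 2 * inner (p - x) (lam *\<^sub>R g x) + (norm (lam *\<^sub>R g x))\<^sup>2) / (2 * lam)
      \<le> r x + (norm (lam *\<^sub>R g x))\<^sup>2 / (2 * lam)"
    using prox[rule_format, of x] by (simp only: norm_add_power2) simp
  then have "r p + (norm (p - x))\<^sup>2 / (2 * lam) + inner (g x) (p - x) \<le> r x"
    using lam by (simp add: add_divide_distrib inner_commute)
  moreover have "l p \<le> l x + inner (g x) (p - x) + L / 2 * (norm (p - x))\<^sup>2"
    using descent_lemma[OF grad lip, of x "p - x"] by simp
  ultimately show ?thesis by (simp add: algebra_simps)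
qed

lemma coercive_imp_bounded_sublevel:
  fixes f :: "'a::real_normed_vector \<Rightarrow> real"
  assumes "filterlim f at_top at_infinity"
  shows "bounded {y. f y \<le> c}"
proof -
  have "eventually (\<lambda>y. c < f y) at_infinity"
    using assms unfolding filterlim_at_top_dense by blast
  then obtain b where "\<And>y. b \<le> norm y \<Longrightarrow> c < f y"
    unfolding eventually_at_infinity by blast
  then show ?thesis
    unfolding bounded_iff by (metis linorder_not_le mem_Collect_eq order_less_imp_le)
qed

lemma continuous_coercive_imp_bdd_below:
  fixes f :: "'a::{heine_borel, real_normed_vector} \<Rightarrow> real"
  assumes cont: "continuous_on UNIV f" and coercive: "filterlim f at_top at_infinity"
  shows "bdd_below (range f)"
proof -
  define S where "S = {y. f y \<le> f 0}"
  have "compact S"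
    unfolding S_def compact_eq_bounded_closed
    using coercive_imp_bounded_sublevel[OF coercive] closed_Collect_le[OF cont continuous_on_const]
    by blast
  moreover have "0 \<in> S" unfolding S_def by simp
  ultimately obtain z where "z \<in> S" "\<forall>y\<in>S. f z \<le> f y"
    using continuous_attains_inf[of S f] continuous_on_subset[OF cont] by blast
  then have "f z \<le> f y" for y unfolding S_def by (cases "y \<in> S") (auto simp: S_def)
  then show ?thesis by (intro bdd_belowI2)
qed

lemma sufficient_decrease_imp_increments_tendsto_zero:
  fixes E :: "nat \<Rightarrow> real" and D :: "nat \<Rightarrow> 'a::real_normed_vector"
  assumes c: "c > 0"
    and dec: "\<And>k. E (Suc k) \<le> E k - c * (norm (D k))\<^sup>2"
    and bdd: "bdd_below (range E)"
  shows "D \<longlonglongrightarrow> 0"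
proof -
  obtain m where m: "\<And>k. m \<le> E k" using bdd by (auto simp: bdd_below_def)
  have telescope: "(\<Sum>i<n. c * (norm (D i))\<^sup>2) \<le> E 0 - E n" for n
  proof (induction n)
    case (Suc n)
    then show ?case using dec[of n] by simp
  qed simp
  have "summable (\<lambda>i. c * (norm (D i))\<^sup>2)"
    using c telescope m by (intro summableI_nonneg_bounded[where x="E 0 - m"])
      (auto intro: order_trans[OF telescope])
  then have "(\<lambda>i. (1 / c) * (c * (norm (D i))\<^sup>2)) \<longlonglongrightarrow> (1 / c) * 0"
    by (intro tendsto_intros summable_LIMSEQ_zero)
  then have "(\<lambda>i. sqrt ((norm (D i))\<^sup>2)) \<longlonglongrightarrow> sqrt 0"
    using c by (intro tendsto_intros) simp
  then show ?thesis by (simp add: tendsto_norm_zero_iff)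
qed

lemma prox_limit_point_in_limiting_subdiff:
  fixes r :: "real ^ 'n \<Rightarrow> real" and g :: "real ^ 'n \<Rightarrow> real ^ 'n"
  assumes lam: "lam > 0"
    and cont_r: "continuous_on UNIV r" and cont_g: "continuous_on UNIV g"
    and prox: "\<And>k. \<forall>y. r (x (Suc k)) + 1 / (2 * lam) * (norm (x (Suc k) - (x k - lam *\<^sub>R g (x k))))\<^sup>2
                \<le> r y + 1 / (2 * lam) * (norm (y - (x k - lam *\<^sub>R g (x k))))\<^sup>2"
    and increments: "(\<lambda>k. x (Suc k) - x k) \<longlonglongrightarrow> 0"
    and s: "strict_mono s" and lim: "(x \<circ> s) \<longlonglongrightarrow> z"
  shows "- g z \<in> limiting_subdiff r z"
proof -
  define ys where "ys j = x (Suc (s j))" for j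
  define vs where "vs j = - (1 / lam) *\<^sub>R (x (Suc (s j)) - (x (s j) - lam *\<^sub>R g (x (s j))))" for j
  have xs: "(\<lambda>j. x (s j)) \<longlonglongrightarrow> z" using lim by (simp add: comp_def)
  have ds: "(\<lambda>j. x (Suc (s j)) - x (s j)) \<longlonglongrightarrow> 0"
    using LIMSEQ_subseq_LIMSEQ[OF increments s] by (simp add: comp_def)
  have "(\<lambda>j. x (s j) + (x (Suc (s j)) - x (s j))) \<longlonglongrightarrow> z + 0"
    using xs ds by (intro tendsto_intros)
  then have ys: "ys \<longlonglongrightarrow> z" by (simp add: ys_def[abs_def])
  have "(\<lambda>j. - (1 / lam) *\<^sub>R (x (Suc (s j)) - x (s j)) - g (x (s j))) \<longlonglongrightarrow> - (1 / lam) *\<^sub>R 0 - g z"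
    using ds continuous_on_tendsto_compose[OF cont_g xs] by (intro tendsto_intros) auto
  moreover have "vs = (\<lambda>j. - (1 / lam) *\<^sub>R (x (Suc (s j)) - x (s j)) - g (x (s j)))"
    using lam by (simp add: vs_def fun_eq_iff algebra_simps)
  ultimately have vs: "vs \<longlonglongrightarrow> - g z" by simp
  have "(\<lambda>j. r (ys j)) \<longlonglongrightarrow> r z"
    using continuous_on_tendsto_compose[OF cont_r ys] by simp
  moreover have "vs j \<in> frechet_subdiff r (ys j)" for j
    unfolding vs_def ys_def by (rule prox_point_frechet_subdiff[OF lam prox])
  ultimately show ?thesis
    unfolding limiting_subdiff_def using ys vs by blast
qed

lemma continuous_on_r_alpha: "continuous_on UNIV (r_alpha \<alpha>)"
  unfolding r_alpha_def[abs_def] l1norm_def by (intro continuous_intros)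

theorem theorem1:
  fixes \<alpha> L lam :: real
    and l :: "real ^ 'n \<Rightarrow> real"
    and g :: "real ^ 'n \<Rightarrow> real ^ 'n"
    and x :: "nat \<Rightarrow> real ^ 'n"
  assumes alpha: "\<alpha> \<ge> 0"
    and grad: "\<And>y. (l has_derivative (\<lambda>h. inner (g y) h)) (at y)"
    and Lpos: "L > 0"
    and lip: "\<And>y z. norm (g y - g z) \<le> L * norm (y - z)"
    and coercive: "filterlim (\<lambda>y. r_alpha \<alpha> y + l y) at_top at_infinity"
    and step: "lam > 0" "lam < 1 / L"
    and iter: "\<And>k. \<forall>y. r_alpha \<alpha> (x (Suc k))
                  + 1 / (2 * lam) * (norm (x (Suc k) - (x k - lam *\<^sub>R g (x k))))\<^sup>2
                \<le> r_alpha \<alpha> y + 1 / (2 * lam) * (norm (y - (x k - lam *\<^sub>R g (x k))))\<^sup>2"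
  shows "(\<forall>k. r_alpha \<alpha> (x (Suc k)) + l (x (Suc k)) \<le> r_alpha \<alpha> (x k) + l (x k))
    \<and> (\<exists>s xs. strict_mono s \<and> ((x \<circ> s) \<longlonglongrightarrow> xs) \<and> stationary_point \<alpha> g xs)
    \<and> (\<forall>s xs. strict_mono s \<and> ((x \<circ> s) \<longlonglongrightarrow> xs) \<longrightarrow> stationary_point \<alpha> g xs)"
proof -
  define E where "E y = r_alpha \<alpha> y + l y" for y
  define c where "c = 1 / (2 * lam) - L / 2"
  have "c > 0" using step Lpos by (simp add: c_def field_simps)
  have decrease: "E (x (Suc k)) \<le> E (x k) - c * (norm (x (Suc k) - x k))\<^sup>2" for k
    unfolding E_def c_def using forward_backward_sufficient_decrease[OF grad lip step(1) iter] .
  have monotone: "E (x (Suc k)) \<le> E (x k)" for k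
    using decrease[of k] mult_nonneg_nonneg[OF less_imp_le[OF \<open>c > 0\<close>] zero_le_power2[of "norm (x (Suc k) - x k)"]]
    by linarith
  have "continuous_on UNIV l"
    using grad by (meson continuous_at_imp_continuous_on has_derivative_continuous)
  then have cont_E: "continuous_on UNIV E"
    unfolding E_def[abs_def] by (intro continuous_on_add continuous_on_r_alpha)
  have "bdd_below (range (\<lambda>k. E (x k)))"
    using continuous_coercive_imp_bdd_below[OF cont_E coercive[folded E_def]]
    by (rule bdd_below_mono) auto
  then have increments: "(\<lambda>k. x (Suc k) - x k) \<longlonglongrightarrow> 0"
    by (rule sufficient_decrease_imp_increments_tendsto_zero[where E="\<lambda>k. E (x k)", OF \<open>c > 0\<close> decrease])
  have "E (x k) \<le> E (x 0)" for k
    by (induction k) (use monotone order_trans in auto)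
  then have "bounded (range x)"
    using bounded_subset[OF coercive_imp_bounded_sublevel[OF coercive[folded E_def]]] by blast
  then obtain s z where "strict_mono s" "(x \<circ> s) \<longlonglongrightarrow> z"
    using bounded_imp_convergent_subsequence by blast
  moreover have "continuous_on UNIV g"
    using Lpos lip by (intro lipschitz_on_continuous_on[of L]) (simp add: lipschitz_on_def dist_norm)
  then have "stationary_point \<alpha> g z" if "strict_mono s" "(x \<circ> s) \<longlonglongrightarrow> z" for s z
    unfolding stationary_point_def
    using prox_limit_point_in_limiting_subdiff[OF step(1) continuous_on_r_alpha _ iter increments that]
    by blast
  ultimately show ?thesis
    using monotone unfolding E_def by blast
qed

end
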